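(* Let $\mathfrak{A}_5$ act on $\mathbb{P}^3=\mathbb{P}(\mathbb{U}_4)$ as described in the context. Then there are no $\mathfrak{A}_5$-invariant surfaces of degree at most three in $\mathbb{P}^3$.
   Context: Let $2.\mathfrak{A}_5$ be the binary icosahedral group (the non-split central extension of $\mathfrak{A}_5$ by $\mu_2$), and let $\mathbb{U}_4$ be its unique faithful irreducible four-dimensional complex representation. This induces a faithful action of $\mathfrak{A}_5$ on $\mathbb{P}^3=\mathbb{P}(\mathbb{U}_4)$. *)

theory Defs
  imports "HOL-Analysis.Analysis"
begin

text \<open>The binary icosahedral group 2.A5, realised as a subgroup of SL2(C) generated by
  Klein's classical generators S and T below (zeta5 a primitive 5th root of unity).
  Closing under multiplication suffices since the group is finite (order 120).\<close>

definition zeta5 :: complex where "zeta5 = cis (2 * pi / 5)"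

definition bi_S :: "complex^2^2" where
  "bi_S = vector [vector [zeta5 ^ 3, 0], vector [0, zeta5 ^ 2]]"

definition bi_T :: "complex^2^2" where
  "bi_T = (let r = complex_of_real (sqrt 5) in
     vector [vector [- (zeta5 - zeta5 ^ 4) / r, (zeta5 ^ 2 - zeta5 ^ 3) / r],
             vector [(zeta5 ^ 2 - zeta5 ^ 3) / r, (zeta5 - zeta5 ^ 4) / r]])"

inductive_set binary_icosahedral :: "(complex^2^2) set" where
  one: "mat 1 \<in> binary_icosahedral"
| mulS: "g \<in> binary_icosahedral \<Longrightarrow> g ** bi_S \<in> binary_icosahedral"
| mulT: "g \<in> binary_icosahedral \<Longrightarrow> g ** bi_T \<in> binary_icosahedral"

text \<open>The faithful irreducible 4-dimensional representation U4 = Sym^3 of the standard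
  2-dimensional representation: a vector x in C^4 is the binary cubic form
  x1 u^3 + x2 u^2 v + x3 u v^2 + x4 v^3, and g = [[a,b],[c,d]] acts by the substitution
  F(u,v) |-> F(a u + b v, c u + d v) (a right action; its image in GL4 is the same group).\<close>

definition sym3 :: "complex^2^2 \<Rightarrow> complex^4 \<Rightarrow> complex^4" where
  "sym3 g x = (let a = g$1$1; b = g$1$2; c = g$2$1; d = g$2$2;
                   x0 = x$1; x1 = x$2; x2 = x$3; x3 = x$4 in
     vector [ x0*a^3 + x1*a^2*c + x2*a*c^2 + x3*c^3,
              3*a^2*b*x0 + x1*(a^2*d + 2*a*b*c) + x2*(b*c^2 + 2*a*c*d) + 3*c^2*d*x3,
              3*a*b^2*x0 + x1*(b^2*c + 2*a*b*d) + x2*(a*d^2 + 2*b*c*d) + 3*c*d^2*x3,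
              b^3*x0 + b^2*d*x1 + b*d^2*x2 + d^3*x3 ])"

definition monomial_exps :: "nat \<Rightarrow> (4 \<Rightarrow> nat) set" where
  "monomial_exps d = {\<alpha>. (\<Sum>i\<in>UNIV. \<alpha> i) = d}"

definition homogeneous_poly :: "nat \<Rightarrow> (complex^4 \<Rightarrow> complex) \<Rightarrow> bool" where
  "homogeneous_poly d f \<longleftrightarrow>
     (\<exists>c :: (4 \<Rightarrow> nat) \<Rightarrow> complex.
        \<forall>x. f x = (\<Sum>\<alpha>\<in>monomial_exps d. c \<alpha> * (\<Prod>i\<in>UNIV. (x$i) ^ (\<alpha> i))))"

text \<open>A surface of degree d in P^3: the zero locus of a nonzero homogeneous polynomial of
  degree d >= 1 (represented by its affine cone in C^4).\<close>

definition surface_of_degree :: "nat \<Rightarrow> (complex^4) set \<Rightarrow> bool" where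
  "surface_of_degree d Z \<longleftrightarrow> 1 \<le> d \<and>
     (\<exists>f. homogeneous_poly d f \<and> f \<noteq> (\<lambda>_. 0) \<and> Z = {x. f x = 0})"

definition A5_invariant :: "(complex^4) set \<Rightarrow> bool" where
  "A5_invariant Z \<longleftrightarrow> (\<forall>g\<in>binary_icosahedral. sym3 g ` Z = Z)"

end

theory Submission
  imports Defs "HOL-Computational_Algebra.Fundamental_Theorem_Algebra"
begin

(* The generator S acts on U4 diagonally with eigenvalues z^4, z^3, z^2, z, z a primitive fifth
   root of unity, so the monomials of a form f fall into five S-weight classes, and the invariance
   of Z = {f = 0} under the powers of S forces every weight part of f to vanish on Z
   (Vandermonde).  Powers of S also rotate the coordinate lines through e1, e4 and through e2, e3,
   on which f restricts to a polynomial of degree d < 5: a root on such a line, which exists as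
   soon as the coefficient of x4^d (resp. x3^d) is nonzero, then forces the coefficient of x1^d
   (resp. x2^d) to vanish.  An antidiagonal group element exchanges e1 with e4 and e2 with e3 up
   to scalars, so all four coordinate points lie on Z, and hence so do their images under T.  For
   d <= 3, the vanishing of each weight part at these four points, whose coordinates are
   polynomials in the golden ratio, is a nonsingular linear system for the remaining coefficients
   of f; so f = 0. *)

lemma power_eq_power_mod:
  fixes z :: "'a::monoid_mult"
  assumes "z ^ k = 1"
  shows "z ^ n = z ^ (n mod k)"
proof -
  have "z ^ n = z ^ (k * (n div k) + n mod k)" by simp
  also have "\<dots> = z ^ (n mod k)" by (simp only: power_add power_mult assms) simp
  finally show ?thesis .
qed

section \<open>The fifth root of unity and the golden ratio\<close>

lemma zeta5_pow_5: "zeta5 ^ 5 = 1"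
proof -
  have "zeta5 ^ 5 = cis (real 5 * (2 * pi / 5))"
    unfolding zeta5_def by (rule Complex.DeMoivre)
  then show ?thesis by simp
qed

lemma zeta5_neq_0: "zeta5 \<noteq> 0"
  by (simp add: zeta5_def)

lemma zeta5_neq_1: "zeta5 \<noteq> 1"
proof
  assume "zeta5 = 1"
  then have "sin (2 * pi / 5) = 0" by (simp add: zeta5_def complex_eq_iff)
  moreover have "sin (2 * pi / 5) > 0" by (rule sin_gt_zero) auto
  ultimately show False by simp
qed

lemma zeta5_cyclotomic: "1 + zeta5 + zeta5^2 + zeta5^3 + zeta5^4 = 0"
proof -
  have "(zeta5 - 1) * (1 + zeta5 + zeta5^2 + zeta5^3 + zeta5^4) = zeta5^5 - 1"
    by (simp add: algebra_simps eval_nat_numeral)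
  with zeta5_pow_5 zeta5_neq_1 show ?thesis by simp
qed

lemma zeta5_power_reduce:
  "zeta5 ^ 6 = zeta5" "zeta5 ^ 8 = zeta5 ^ 3" "zeta5 ^ 9 = zeta5 ^ 4"
  "zeta5 ^ 12 = zeta5 ^ 2" "zeta5 ^ 16 = zeta5"
  by (subst power_eq_power_mod[OF zeta5_pow_5]; simp)+

lemma zeta5_vandermonde:
  assumes "\<And>n. n < 5 \<Longrightarrow> (\<Sum>w<5. g w * (zeta5 ^ n) ^ w) = 0" and "w < 5"
  shows "g w = 0"
proof -
  have eq: "g 0 + g 1 * z + g 2 * z^2 + g 3 * z^3 + g 4 * z^4 = 0" if "z = zeta5 ^ n" "n < 5" for z n
    using assms(1)[OF that(2)] by (simp add: that(1) numeral_eq_Suc)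
  have "g 0 + g 1 + g 2 + g 3 + g 4 = 0"
    "g 0 + g 1 * zeta5 + g 2 * zeta5^2 + g 3 * zeta5^3 + g 4 * zeta5^4 = 0"
    "g 0 + g 1 * zeta5^2 + g 2 * zeta5^4 + g 3 * zeta5 + g 4 * zeta5^3 = 0"
    "g 0 + g 1 * zeta5^3 + g 2 * zeta5 + g 3 * zeta5^4 + g 4 * zeta5^2 = 0"
    "g 0 + g 1 * zeta5^4 + g 2 * zeta5^3 + g 3 * zeta5^2 + g 4 * zeta5 = 0"
    using eq[of 1 0] eq[of zeta5 1] eq[of "zeta5^2" 2] eq[of "zeta5^3" 3] eq[of "zeta5^4" 4]
    by (simp_all add: zeta5_power_reduce flip: power_mult)
  then have "g 0 = 0 \<and> g 1 = 0 \<and> g 2 = 0 \<and> g 3 = 0 \<and> g 4 = 0"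
    using zeta5_cyclotomic zeta5_pow_5 by algebra
  with \<open>w < 5\<close> show ?thesis by (auto simp: less_Suc_eq numeral_eq_Suc)
qed

lemma coeff_0_eq_0_if_vanishes_on_zeta5_orbit:
  assumes "d < 5" and vanish: "\<And>n. (\<Sum>j\<le>d. a j * (zeta5 ^ n * t) ^ j) = 0"
  shows "a 0 = 0"
proof -
  have "(\<Sum>j<5. (if j \<le> d then a j * t ^ j else 0) * (zeta5 ^ n) ^ j) = 0" for n
  proof -
    have "(\<Sum>j<5. (if j \<le> d then a j * t ^ j else 0) * (zeta5 ^ n) ^ j)
        = (\<Sum>j<5. if j \<le> d then a j * (zeta5 ^ n * t) ^ j else 0)"
      by (rule sum.cong) (simp_all add: power_mult_distrib)
    also have "\<dots> = (\<Sum>j\<in>{j \<in> {..<5}. j \<le> d}. a j * (zeta5 ^ n * t) ^ j)"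
      by (rule sum.inter_filter[symmetric]) simp
    also have "{j \<in> {..<5}. j \<le> d} = {..d}" using assms(1) by auto
    finally show ?thesis using vanish by simp
  qed
  from zeta5_vandermonde[OF this, of 0] show ?thesis by simp
qed

lemma zeta5_plus_zeta5_pow_4: "zeta5 + zeta5^4 = complex_of_real (2 * cos (2 * pi / 5))"
proof -
  have "zeta5^4 * zeta5 = 1" using zeta5_pow_5 by (simp add: eval_nat_numeral mult.assoc)
  then have "zeta5^4 = inverse zeta5" using zeta5_neq_0 by (simp add: field_simps)
  then show ?thesis by (simp add: zeta5_def cis_inverse complex_eq_iff)
qed

(* The quadratic Gauss sum for the prime 5. *)
lemma sqrt5_eq_zeta5: "complex_of_real (sqrt 5) = 1 + 2 * zeta5 + 2 * zeta5^4"
proof -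
  define x where "x = cos (2 * pi / 5)"
  have sum: "zeta5 + zeta5^4 = complex_of_real (2 * x)"
    using zeta5_plus_zeta5_pow_4 by (simp add: x_def)
  have "(zeta5 + zeta5^4)^2 + (zeta5 + zeta5^4) - 1 = 0"
    using zeta5_cyclotomic zeta5_pow_5 by algebra
  then have "complex_of_real ((2 * x)^2 + 2 * x - 1) = 0" unfolding sum by simp
  then have "(1 + 4 * x)^2 = 5" by (simp only: of_real_eq_0_iff) (simp add: power2_eq_square algebra_simps)
  moreover have "x > 0" unfolding x_def by (rule cos_gt_zero) (auto simp: field_simps)
  ultimately have "sqrt 5 = 1 + 4 * x" by (metis abs_of_pos real_sqrt_abs add_pos_pos zero_less_one
      mult_pos_pos zero_less_numeral)
  then have "complex_of_real (sqrt 5) = 1 + 2 * (zeta5 + zeta5^4)" by (simp add: sum)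
  then show ?thesis by (simp add: algebra_simps)
qed

definition golden :: complex where "golden = (1 + complex_of_real (sqrt 5)) / 2"

lemma golden_sq: "golden^2 = golden + 1"
proof -
  have "complex_of_real (sqrt 5) ^ 2 = 5" by (simp flip: of_real_power)
  then show ?thesis unfolding golden_def by (simp add: power2_eq_square field_simps)
qed

section \<open>The action of the generators on binary cubics\<close>

definition mat2 :: "complex \<Rightarrow> complex \<Rightarrow> complex \<Rightarrow> complex \<Rightarrow> complex^2^2" where
  "mat2 a b c d = vector [vector [a, b], vector [c, d]]"

lemma mat2_nth [simp]:
  "mat2 a b c d $ 1 $ 1 = a" "mat2 a b c d $ 1 $ 2 = b"
  "mat2 a b c d $ 2 $ 1 = c" "mat2 a b c d $ 2 $ 2 = d"
  by (simp_all add: mat2_def)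

lemma mat2_mult:
  "mat2 a b c d ** mat2 a' b' c' d' = mat2 (a*a' + b*c') (a*b' + b*d') (c*a' + d*c') (c*b' + d*d')"
  by (simp add: vec_eq_iff forall_2 matrix_matrix_mult_def sum_2)

lemma mat2_eq_iff: "mat2 a b c d = mat2 a' b' c' d' \<longleftrightarrow> a = a' \<and> b = b' \<and> c = c' \<and> d = d'"
  by (metis mat2_nth)

lemma mat_1_eq_mat2: "mat 1 = mat2 1 0 0 1"
  by (simp add: vec_eq_iff forall_2 mat_def)

lemma prod_4: "prod f (UNIV::4 set) = f 1 * f 2 * f 3 * f 4"
  unfolding UNIV_4 by (simp add: ac_simps)

lemma vector_4_nth [simp]:
  "(vector [x1, x2, x3, x4] :: 'a::zero^4) $ 1 = x1"
  "(vector [x1, x2, x3, x4] :: 'a::zero^4) $ 2 = x2"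
  "(vector [x1, x2, x3, x4] :: 'a::zero^4) $ 3 = x3"
  "(vector [x1, x2, x3, x4] :: 'a::zero^4) $ 4 = x4"
  by (simp_all add: vector_def)

lemma sym3_mat2: "sym3 (mat2 a b c d) x = vector
  [x$1*a^3 + x$2*a^2*c + x$3*a*c^2 + x$4*c^3,
   3*a^2*b*x$1 + x$2*(a^2*d + 2*a*b*c) + x$3*(b*c^2 + 2*a*c*d) + 3*c^2*d*x$4,
   3*a*b^2*x$1 + x$2*(b^2*c + 2*a*b*d) + x$3*(a*d^2 + 2*b*c*d) + 3*c*d^2*x$4,
   b^3*x$1 + b^2*d*x$2 + b*d^2*x$3 + d^3*x$4]"
  by (simp add: sym3_def Let_def)

lemma sym3_mat2_scale: "sym3 (mat2 (s * a) (s * b) (s * c) (s * d)) x = s^3 *s sym3 (mat2 a b c d) x"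
  unfolding sym3_mat2 by (simp add: vec_eq_iff forall_4 algebra_simps eval_nat_numeral)

lemma sym3_antidiagonal:
  "sym3 (mat2 0 b c 0) (axis 1 1) = b^3 *s axis 4 1"
  "sym3 (mat2 0 b c 0) (axis 4 1) = c^3 *s axis 1 1"
  "sym3 (mat2 0 b c 0) (axis 2 1) = (b^2 * c) *s axis 3 1"
  "sym3 (mat2 0 b c 0) (axis 3 1) = (b * c^2) *s axis 2 1"
  unfolding sym3_mat2 by (simp_all add: vec_eq_iff forall_4 axis_def)

lemma bi_S_eq_mat2: "bi_S = mat2 (zeta5^3) 0 0 (zeta5^2)"
  by (simp add: bi_S_def mat2_def)

definition bi_T_scale :: complex where
  "bi_T_scale = (zeta5^2 - zeta5^3) / complex_of_real (sqrt 5)"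

lemma bi_T_scale_neq_0: "bi_T_scale \<noteq> 0"
proof -
  have "zeta5^2 - zeta5^3 = zeta5^2 * (1 - zeta5)" by (simp add: algebra_simps eval_nat_numeral)
  with zeta5_neq_0 zeta5_neq_1 show ?thesis by (simp add: bi_T_scale_def)
qed

lemma bi_T_eq_mat2: "bi_T = mat2 (- bi_T_scale * golden) bi_T_scale bi_T_scale (bi_T_scale * golden)"
proof -
  have "zeta5 - zeta5^4 = golden * (zeta5^2 - zeta5^3)"
    using zeta5_pow_5 unfolding golden_def sqrt5_eq_zeta5 by algebra
  then show ?thesis
    by (simp add: bi_T_def Let_def mat2_def bi_T_scale_def mult.commute)
qed

lemma sym3_bi_T: "sym3 bi_T x = bi_T_scale^3 *s sym3 (mat2 (- golden) 1 1 golden) x"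
  using sym3_mat2_scale[of bi_T_scale "- golden" 1 1 golden] by (simp add: bi_T_eq_mat2)

lemma bi_S_mem: "bi_S \<in> binary_icosahedral"
  using binary_icosahedral.mulS[OF binary_icosahedral.one] by (simp add: matrix_mul_lid)

lemma bi_T_mem: "bi_T \<in> binary_icosahedral"
  using binary_icosahedral.mulT[OF binary_icosahedral.one] by (simp add: matrix_mul_lid)

definition swap_element :: "complex^2^2" where
  "swap_element = mat 1 ** bi_T ** bi_S ** bi_S ** bi_S ** bi_T ** bi_S ** bi_S ** bi_T"

lemma swap_element_mem: "swap_element \<in> binary_icosahedral"
  unfolding swap_element_def by (intro binary_icosahedral.intros)

lemma swap_element_eq: "swap_element = mat2 0 (zeta5^4) (- zeta5) 0"
proof -
  define r where "r = complex_of_real (sqrt 5)"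
  have r: "r = 1 + 2 * zeta5 + 2 * zeta5^4" unfolding r_def by (rule sqrt5_eq_zeta5)
  have q: "bi_T_scale * r = zeta5^2 - zeta5^3" by (simp add: bi_T_scale_def r_def)
  have g: "2 * golden = 1 + r" by (simp add: golden_def r_def)
  show ?thesis
    unfolding swap_element_def mat_1_eq_mat2 bi_S_eq_mat2 bi_T_eq_mat2 mat2_mult mat2_eq_iff
    using r q g zeta5_pow_5 zeta5_cyclotomic by (intro conjI; algebra)
qed

definition twist :: "complex \<Rightarrow> complex^4 \<Rightarrow> complex^4" where
  "twist z x = vector [z^4 * x$1, z^3 * x$2, z^2 * x$3, z * x$4]"

lemma sym3_bi_S: "sym3 bi_S x = twist zeta5 x"
  using zeta5_pow_5 unfolding bi_S_eq_mat2 sym3_mat2 twist_def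
  by (simp add: vec_eq_iff forall_4) algebra

lemma twist_twist: "twist z (twist z' x) = twist (z * z') x"
  by (simp add: twist_def power_mult_distrib mult.assoc)

section \<open>Homogeneous polynomials and their weight decomposition\<close>

definition monomial :: "(4 \<Rightarrow> nat) \<Rightarrow> complex^4 \<Rightarrow> complex" where
  "monomial \<alpha> x = (\<Prod>i\<in>UNIV. x$i ^ \<alpha> i)"

definition hpoly :: "nat \<Rightarrow> ((4 \<Rightarrow> nat) \<Rightarrow> complex) \<Rightarrow> complex^4 \<Rightarrow> complex" where
  "hpoly d c x = (\<Sum>\<alpha>\<in>monomial_exps d. c \<alpha> * monomial \<alpha> x)"

lemma homogeneous_poly_iff: "homogeneous_poly d f \<longleftrightarrow> (\<exists>c. f = hpoly d c)"
  by (auto simp: homogeneous_poly_def hpoly_def monomial_def fun_eq_iff)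

lemma finite_monomial_exps: "finite (monomial_exps d)"
proof (rule finite_subset)
  show "monomial_exps d \<subseteq> {\<alpha>. \<forall>i. (i \<in> UNIV \<longrightarrow> \<alpha> i \<in> {..d}) \<and> (i \<notin> UNIV \<longrightarrow> \<alpha> i = 0)}"
    by (auto simp: monomial_exps_def intro!: member_le_sum)
  show "finite {\<alpha>::4 \<Rightarrow> nat. \<forall>i. (i \<in> UNIV \<longrightarrow> \<alpha> i \<in> {..d}) \<and> (i \<notin> UNIV \<longrightarrow> \<alpha> i = 0)}"
    by (rule finite_set_of_finite_funs) auto
qed

lemma monomial_scale: "monomial \<alpha> (s *s x) = s ^ (\<Sum>i\<in>UNIV. \<alpha> i) * monomial \<alpha> x"
  by (simp add: monomial_def power_sum power_mult_distrib prod.distrib)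

lemma hpoly_scale: "hpoly d c (s *s x) = s ^ d * hpoly d c x"
  by (simp add: hpoly_def monomial_scale monomial_exps_def sum_distrib_left ac_simps)

definition twist_weight :: "(4 \<Rightarrow> nat) \<Rightarrow> nat" where
  "twist_weight \<alpha> = (4 * \<alpha> 1 + 3 * \<alpha> 2 + 2 * \<alpha> 3 + \<alpha> 4) mod 5"

lemma twist_weight_less: "twist_weight \<alpha> < 5"
  by (simp add: twist_weight_def)

definition weight_part :: "nat \<Rightarrow> ((4 \<Rightarrow> nat) \<Rightarrow> complex) \<Rightarrow> nat \<Rightarrow> complex^4 \<Rightarrow> complex" where
  "weight_part d c w x =
     (\<Sum>\<alpha>\<in>monomial_exps d. if twist_weight \<alpha> = w then c \<alpha> * monomial \<alpha> x else 0)"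

lemma weight_part_eq_0_if_ge_5:
  assumes "5 \<le> w"
  shows "weight_part d c w x = 0"
proof -
  have "twist_weight \<alpha> \<noteq> w" for \<alpha> using twist_weight_less[of \<alpha>] assms by linarith
  then show ?thesis by (simp add: weight_part_def)
qed

lemma weight_part_scale: "weight_part d c w (s *s x) = s ^ d * weight_part d c w x"
  unfolding weight_part_def sum_distrib_left
  by (rule sum.cong) (auto simp: monomial_exps_def monomial_scale)

lemma monomial_twist:
  assumes "z ^ 5 = 1"
  shows "monomial \<alpha> (twist z x) = z ^ twist_weight \<alpha> * monomial \<alpha> x"
  using power_eq_power_mod[OF assms]
  by (simp add: monomial_def twist_def prod_4 twist_weight_def power_mult_distrib power_add
      flip: power_mult)

lemma hpoly_twist:
  assumes "z ^ 5 = 1"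
  shows "hpoly d c (twist z x) = (\<Sum>w<5. weight_part d c w x * z ^ w)"
proof -
  have "c \<alpha> * monomial \<alpha> (twist z x)
      = (\<Sum>w<5. (if twist_weight \<alpha> = w then c \<alpha> * monomial \<alpha> x else 0) * z ^ w)" for \<alpha>
  proof -
    from twist_weight_less have "(\<Sum>w<5. if twist_weight \<alpha> = w then c \<alpha> * monomial \<alpha> x * z ^ w else 0)
        = c \<alpha> * monomial \<alpha> (twist z x)"
      by (simp add: monomial_twist[OF assms])
    moreover have "(\<Sum>w<5. (if twist_weight \<alpha> = w then c \<alpha> * monomial \<alpha> x else 0) * z ^ w)
        = (\<Sum>w<5. if twist_weight \<alpha> = w then c \<alpha> * monomial \<alpha> x * z ^ w else 0)"
      by (rule sum.cong) simp_all
    ultimately show ?thesis by simp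
  qed
  then show ?thesis
    by (simp add: hpoly_def weight_part_def sum_distrib_right sum.swap[of _ "{..<5}"])
qed

lemma sum_supported_on_two:
  fixes \<alpha> :: "'a::finite \<Rightarrow> nat"
  assumes "p \<noteq> q" "\<forall>i. i \<noteq> p \<longrightarrow> i \<noteq> q \<longrightarrow> \<alpha> i = 0"
  shows "(\<Sum>i\<in>UNIV. \<alpha> i) = \<alpha> p + \<alpha> q"
proof -
  have "(\<Sum>i\<in>UNIV. \<alpha> i) = (\<Sum>i\<in>{p, q}. \<alpha> i)"
    using assms(2) by (intro sum.mono_neutral_right) auto
  with assms(1) show ?thesis by simp
qed

lemma monomial_coordinate_line:
  assumes "p \<noteq> q"
  shows "monomial \<alpha> (axis p 1 + t *s axis q 1)
    = (if \<forall>i. i \<noteq> p \<longrightarrow> i \<noteq> q \<longrightarrow> \<alpha> i = 0 then t ^ \<alpha> q else 0)"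
proof (cases "\<forall>i. i \<noteq> p \<longrightarrow> i \<noteq> q \<longrightarrow> \<alpha> i = 0")
  case True
  then have "monomial \<alpha> (axis p 1 + t *s axis q 1) = (\<Prod>i\<in>UNIV. if i = q then t ^ \<alpha> q else 1)"
    unfolding monomial_def by (intro prod.cong) (auto simp: axis_def assms)
  with True show ?thesis by simp
next
  case False
  then obtain i where "i \<noteq> p" "i \<noteq> q" "\<alpha> i \<noteq> 0" by blast
  then have "(axis p 1 + t *s axis q 1) $ i ^ \<alpha> i = 0" by (simp add: axis_def)
  with False show ?thesis unfolding monomial_def by (auto intro: prod_zero)
qed

lemma hpoly_coordinate_line:
  assumes "p \<noteq> q"
  shows "hpoly d c (axis p 1 + t *s axis q 1)
    = (\<Sum>j\<le>d. c (\<lambda>i. if i = p then d - j else if i = q then j else 0) * t ^ j)"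
proof -
  let ?L = "{\<alpha> \<in> monomial_exps d. \<forall>i. i \<noteq> p \<longrightarrow> i \<noteq> q \<longrightarrow> \<alpha> i = 0}"
  have "hpoly d c (axis p 1 + t *s axis q 1)
      = (\<Sum>\<alpha>\<in>monomial_exps d. if \<forall>i. i \<noteq> p \<longrightarrow> i \<noteq> q \<longrightarrow> \<alpha> i = 0 then c \<alpha> * t ^ \<alpha> q else 0)"
    unfolding hpoly_def by (rule sum.cong) (auto simp: monomial_coordinate_line[OF assms])
  also have "\<dots> = (\<Sum>\<alpha>\<in>?L. c \<alpha> * t ^ \<alpha> q)"
    by (simp add: sum.inter_filter finite_monomial_exps)
  also have "\<dots> = (\<Sum>j\<le>d. c (\<lambda>i. if i = p then d - j else if i = q then j else 0) * t ^ j)"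
  proof (rule sum.reindex_bij_witness[where j = "\<lambda>\<alpha>. \<alpha> q"
        and i = "\<lambda>j i. if i = p then d - j else if i = q then j else 0"])
    fix \<alpha> assume "\<alpha> \<in> ?L"
    then have \<alpha>: "\<alpha> p + \<alpha> q = d" "\<forall>i. i \<noteq> p \<longrightarrow> i \<noteq> q \<longrightarrow> \<alpha> i = 0"
      using sum_supported_on_two[OF assms] by (auto simp: monomial_exps_def)
    then show eq: "(\<lambda>i. if i = p then d - \<alpha> q else if i = q then \<alpha> q else 0) = \<alpha>"
      by (auto simp: fun_eq_iff)
    show "\<alpha> q \<in> {..d}" using \<alpha> by simp
    show "c (\<lambda>i. if i = p then d - \<alpha> q else if i = q then \<alpha> q else 0) * t ^ \<alpha> q = c \<alpha> * t ^ \<alpha> q"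
      by (simp only: eq)
  next
    fix j assume "j \<in> {..d}"
    then show "(\<lambda>i. if i = p then d - j else if i = q then j else 0) \<in> ?L"
      using assms sum_supported_on_two[OF assms, of "\<lambda>i. if i = p then d - j else if i = q then j else 0"]
      by (auto simp: monomial_exps_def)
    show "(if q = p then d - j else if q = q then j else 0) = j" using assms by simp
  qed
  finally show ?thesis .
qed

lemma hpoly_axis: "hpoly d c (axis p 1) = c (\<lambda>i. if i = p then d else 0)"
proof -
  obtain q :: 4 where "q \<noteq> p" by (metis zero_neq_one)
  from hpoly_coordinate_line[OF this[symmetric], of d c 0] show ?thesis by (simp cong: if_cong)
qed

lemma exists_root:
  fixes a :: "nat \<Rightarrow> complex"
  assumes "1 \<le> d" "a d \<noteq> 0"
  shows "\<exists>t. (\<Sum>j\<le>d. a j * t ^ j) = 0"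
proof -
  define p where "p = (\<Sum>j\<le>d. monom (a j) j)"
  have "coeff p d = a d" by (simp add: p_def coeff_sum)
  then have "1 \<le> degree p" using assms le_degree[of p d] by simp
  then have "\<not> constant (poly p)" by (simp add: constant_degree)
  then obtain t where "poly p t = 0" using fundamental_theorem_of_algebra by blast
  then show ?thesis by (auto simp: p_def poly_sum poly_monom)
qed

section \<open>Invariant zero sets\<close>

locale invariant_hypersurface =
  fixes d :: nat and c :: "(4 \<Rightarrow> nat) \<Rightarrow> complex" and Z :: "(complex^4) set"
  assumes invariant: "A5_invariant Z"
    and zero_set: "Z = {x. hpoly d c x = 0}"
begin

lemma sym3_mem: "g \<in> binary_icosahedral \<Longrightarrow> x \<in> Z \<Longrightarrow> sym3 g x \<in> Z"
  using invariant unfolding A5_invariant_def by blast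

lemma twist_mem: "x \<in> Z \<Longrightarrow> twist (zeta5 ^ n) x \<in> Z"
proof (induction n)
  case 0
  have "twist 1 x = x" by (simp add: twist_def vec_eq_iff forall_4)
  with 0 show ?case by simp
next
  case (Suc n)
  then have "sym3 bi_S (twist (zeta5 ^ n) x) \<in> Z" using sym3_mem[OF bi_S_mem] by blast
  then show ?case by (simp add: sym3_bi_S twist_twist mult.commute)
qed

lemma scale_mem_iff: "s \<noteq> 0 \<Longrightarrow> s *s x \<in> Z \<longleftrightarrow> x \<in> Z"
  by (simp add: zero_set hpoly_scale)

lemma uminus_mem_iff: "- x \<in> Z \<longleftrightarrow> x \<in> Z"
  using scale_mem_iff[of "-1" x] by simp

lemma weight_part_vanishes:
  assumes "y \<in> Z"
  shows "weight_part d c w y = 0"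
proof (cases "w < 5")
  case True
  show ?thesis
  proof (rule zeta5_vandermonde[OF _ True])
    fix n :: nat
    have "(zeta5 ^ n) ^ 5 = (zeta5 ^ 5) ^ n" by (simp only: power_mult[symmetric] mult.commute)
    then have "(zeta5 ^ n) ^ 5 = 1" by (simp add: zeta5_pow_5)
    moreover have "twist (zeta5 ^ n) y \<in> Z" using twist_mem[OF assms] .
    ultimately show "(\<Sum>w<5. weight_part d c w y * (zeta5 ^ n) ^ w) = 0"
      by (simp add: zero_set hpoly_twist)
  qed
qed (simp add: weight_part_eq_0_if_ge_5)

lemma axis_mem_if_line_rotates:
  assumes "p \<noteq> q" "1 \<le> d" "d < 5"
    and rotate: "\<And>t. axis p 1 + t *s axis q 1 \<in> Z \<Longrightarrow> axis p 1 + (zeta5 * t) *s axis q 1 \<in> Z"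
  shows "axis p 1 \<in> Z \<or> axis q 1 \<in> Z"
proof (rule disjCI)
  assume "axis q 1 \<notin> Z"
  define a where "a j = c (\<lambda>i. if i = p then d - j else if i = q then j else 0)" for j
  have line: "axis p 1 + t *s axis q 1 \<in> Z \<longleftrightarrow> (\<Sum>j\<le>d. a j * t ^ j) = 0" for t
    by (simp add: zero_set hpoly_coordinate_line[OF assms(1)] a_def)
  have "(\<lambda>i. if i = p then d - d else if i = q then d else 0) = (\<lambda>i. if i = q then d else 0)"
    using assms(1) by (auto simp: fun_eq_iff)
  with \<open>axis q 1 \<notin> Z\<close> have "a d \<noteq> 0" by (simp add: zero_set hpoly_axis a_def)
  then obtain t where "(\<Sum>j\<le>d. a j * t ^ j) = 0" using exists_root[OF assms(2)] by blast
  then have "axis p 1 + (zeta5 ^ n * t) *s axis q 1 \<in> Z" for n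
    by (induction n) (use line rotate in \<open>auto simp: mult.assoc\<close>)
  with line have "a 0 = 0" by (intro coeff_0_eq_0_if_vanishes_on_zeta5_orbit[OF assms(3)]) blast
  then show "axis p 1 \<in> Z" by (simp add: zero_set hpoly_axis a_def cong: if_cong)
qed

lemma axis_mem:
  assumes "1 \<le> d" "d < 5"
  shows "axis j 1 \<in> Z"
proof -
  have rotate: "axis p 1 + (zeta5 * t) *s axis q 1 \<in> Z"
    if "twist (zeta5 ^ n) (axis p 1 + t *s axis q 1) = zeta5^2 *s (axis p 1 + (zeta5 * t) *s axis q 1)"
      and "axis p 1 + t *s axis q 1 \<in> Z" for p q t n
  proof -
    have "zeta5^2 *s (axis p 1 + (zeta5 * t) *s axis q 1) \<in> Z"
      using twist_mem[OF that(2), of n] by (simp only: that(1))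
    then show ?thesis using scale_mem_iff[of "zeta5^2"] power_not_zero[OF zeta5_neq_0] by blast
  qed
  have twist_14: "twist (zeta5 ^ 3) (axis 1 1 + t *s axis 4 1) = zeta5^2 *s (axis 1 1 + (zeta5 * t) *s axis 4 1)"
    for t using zeta5_pow_5 by (simp add: twist_def vec_eq_iff forall_4 axis_def) algebra
  have twist_23: "twist (zeta5 ^ 4) (axis 2 1 + t *s axis 3 1) = zeta5^2 *s (axis 2 1 + (zeta5 * t) *s axis 3 1)"
    for t using zeta5_pow_5 by (simp add: twist_def vec_eq_iff forall_4 axis_def) algebra
  have "axis 1 1 \<in> Z \<or> axis 4 1 \<in> Z"
    using assms by (intro axis_mem_if_line_rotates rotate[OF twist_14]) simp_all
  moreover have "axis 2 1 \<in> Z \<or> axis 3 1 \<in> Z"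
    using assms by (intro axis_mem_if_line_rotates rotate[OF twist_23]) simp_all
  moreover have "axis 1 1 \<in> Z \<longleftrightarrow> axis 4 1 \<in> Z" "axis 2 1 \<in> Z \<longleftrightarrow> axis 3 1 \<in> Z"
    using sym3_mem[OF swap_element_mem, of "axis 1 1"] sym3_mem[OF swap_element_mem, of "axis 2 1"]
      sym3_mem[OF swap_element_mem, of "axis 3 1"] sym3_mem[OF swap_element_mem, of "axis 4 1"]
    by (auto simp: swap_element_eq sym3_antidiagonal scale_mem_iff uminus_mem_iff zeta5_neq_0)
  ultimately show ?thesis using exhaust_4[of j] by auto
qed

lemma weight_part_vanishes_at_T_image:
  assumes "axis j 1 \<in> Z"
  shows "weight_part d c w (sym3 (mat2 (- golden) 1 1 golden) (axis j 1)) = 0"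
proof -
  have "bi_T_scale^3 *s sym3 (mat2 (- golden) 1 1 golden) (axis j 1) \<in> Z"
    using sym3_mem[OF bi_T_mem assms] by (simp add: sym3_bi_T)
  from weight_part_vanishes[OF this] show ?thesis
    using bi_T_scale_neq_0 by (simp add: weight_part_scale)
qed

end

section \<open>Forms of degree at most three\<close>

definition exps :: "nat \<Rightarrow> nat \<Rightarrow> nat \<Rightarrow> nat \<Rightarrow> 4 \<Rightarrow> nat" where
  "exps a b c e = (\<lambda>i. if i = 1 then a else if i = 2 then b else if i = 3 then c else e)"

lemma exps_nth [simp]: "exps a b c e 1 = a" "exps a b c e 2 = b" "exps a b c e 3 = c" "exps a b c e 4 = e"
  by (simp_all add: exps_def)

lemma exps_eta: "exps (\<alpha> 1) (\<alpha> 2) (\<alpha> 3) (\<alpha> 4) = \<alpha>"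
  by (simp add: fun_eq_iff forall_4)

lemma sum_monomial_exps:
  "(\<Sum>\<alpha>\<in>monomial_exps d. g \<alpha>) = (\<Sum>a\<le>d. \<Sum>b\<le>d-a. \<Sum>c\<le>d-a-b. g (exps a b c (d-a-b-c)))"
proof -
  let ?T = "Sigma {..d} (\<lambda>a. Sigma {..d-a} (\<lambda>b. {..d-a-b}))"
  have "(\<Sum>\<alpha>\<in>monomial_exps d. g \<alpha>) = (\<Sum>(a, b, c)\<in>?T. g (exps a b c (d-a-b-c)))"
  proof (rule sum.reindex_bij_witness[where j = "\<lambda>\<alpha>. (\<alpha> 1, \<alpha> 2, \<alpha> 3)"
        and i = "\<lambda>(a, b, c). exps a b c (d-a-b-c)"])
    fix \<alpha> assume "\<alpha> \<in> monomial_exps d"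
    then have sum: "\<alpha> 1 + \<alpha> 2 + \<alpha> 3 + \<alpha> 4 = d" by (simp add: monomial_exps_def sum_4)
    then have eq: "exps (\<alpha> 1) (\<alpha> 2) (\<alpha> 3) (d - \<alpha> 1 - \<alpha> 2 - \<alpha> 3) = \<alpha>"
      using exps_eta[of \<alpha>] by (metis add_diff_cancel_left' diff_diff_left)
    then show "(case (\<alpha> 1, \<alpha> 2, \<alpha> 3) of (a, b, c) \<Rightarrow> exps a b c (d-a-b-c)) = \<alpha>" by simp
    show "(\<alpha> 1, \<alpha> 2, \<alpha> 3) \<in> ?T" using sum by auto
    show "(case (\<alpha> 1, \<alpha> 2, \<alpha> 3) of (a, b, c) \<Rightarrow> g (exps a b c (d-a-b-c))) = g \<alpha>" using eq by simp
  next
    fix t assume "t \<in> ?T"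
    then show "(case t of (a, b, c) \<Rightarrow> exps a b c (d-a-b-c)) \<in> monomial_exps d"
      and "(\<lambda>\<alpha>. (\<alpha> 1, \<alpha> 2, \<alpha> 3)) (case t of (a, b, c) \<Rightarrow> exps a b c (d-a-b-c)) = t"
      by (auto simp: monomial_exps_def sum_4)
  qed
  also have "\<dots> = (\<Sum>a\<le>d. \<Sum>b\<le>d-a. \<Sum>c\<le>d-a-b. g (exps a b c (d-a-b-c)))"
    by (simp add: sum.Sigma)
  finally show ?thesis .
qed

lemmas hpoly_expand = hpoly_def weight_part_def sum_monomial_exps monomial_def prod_4 twist_weight_def
  atMost_nat_numeral atMost_Suc[of 0, simplified]

lemma linear_form_eq_0:
  assumes "\<And>j. hpoly 1 c (axis j 1) = 0"
  shows "hpoly 1 c x = 0"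
  using assms[of 1] assms[of 2] assms[of 3] assms[of 4]
  by (simp add: hpoly_expand axis_def)

lemma quadric_eq_0:
  assumes golden: "\<phi>^2 = \<phi> + 1"
    and axes: "\<And>j. hpoly 2 c (axis j 1) = 0"
    and T_images: "\<And>j w. weight_part 2 c w (sym3 (mat2 (-\<phi>) 1 1 \<phi>) (axis j 1)) = 0"
  shows "hpoly 2 c x = 0"
proof -
  have pure: "c (exps 2 0 0 0) = 0" "c (exps 0 2 0 0) = 0" "c (exps 0 0 2 0) = 0" "c (exps 0 0 0 2) = 0"
    using axes[of 1] axes[of 2] axes[of 3] axes[of 4] by (simp_all add: hpoly_expand axis_def)
  note W = T_images[where j = 1] T_images[where j = 2] T_images[where j = 3] T_images[where j = 4]
  (* One linear system per weight class: four equations in at most four unknowns. *)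
  have "c (exps 1 0 0 1) = 0 \<and> c (exps 0 1 1 0) = 0"
    using golden W[where w = 0] by (simp add: hpoly_expand sym3_mat2 axis_def) algebra
  moreover have "c (exps 1 0 1 0) = 0"
    using golden pure W[where w = 1] by (simp add: hpoly_expand sym3_mat2 axis_def) algebra
  moreover have "c (exps 1 1 0 0) = 0"
    using golden pure W[where w = 2] by (simp add: hpoly_expand sym3_mat2 axis_def) algebra
  moreover have "c (exps 0 0 1 1) = 0"
    using golden pure W[where w = 3] by (simp add: hpoly_expand sym3_mat2 axis_def) algebra
  moreover have "c (exps 0 1 0 1) = 0"
    using golden pure W[where w = 4] by (simp add: hpoly_expand sym3_mat2 axis_def) algebra
  ultimately show ?thesis using pure by (simp add: hpoly_expand)
qed

lemma cubic_eq_0: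
  assumes golden: "\<phi>^2 = \<phi> + 1"
    and axes: "\<And>j. hpoly 3 c (axis j 1) = 0"
    and T_images: "\<And>j w. weight_part 3 c w (sym3 (mat2 (-\<phi>) 1 1 \<phi>) (axis j 1)) = 0"
  shows "hpoly 3 c x = 0"
proof -
  have pure: "c (exps 3 0 0 0) = 0" "c (exps 0 3 0 0) = 0" "c (exps 0 0 3 0) = 0" "c (exps 0 0 0 3) = 0"
    using axes[of 1] axes[of 2] axes[of 3] axes[of 4] by (simp_all add: hpoly_expand axis_def)
  note W = T_images[where j = 1] T_images[where j = 2] T_images[where j = 3] T_images[where j = 4]
  have "c (exps 2 0 1 0) = 0 \<and> c (exps 1 2 0 0) = 0 \<and> c (exps 0 1 0 2) = 0 \<and> c (exps 0 0 2 1) = 0"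
    using golden W[where w = 0] by (simp add: hpoly_expand sym3_mat2 axis_def) algebra
  moreover have "c (exps 2 1 0 0) = 0 \<and> c (exps 1 0 0 2) = 0 \<and> c (exps 0 1 1 1) = 0"
    using golden pure W[where w = 1] by (simp add: hpoly_expand sym3_mat2 axis_def) algebra
  moreover have "c (exps 1 0 1 1) = 0 \<and> c (exps 0 2 0 1) = 0 \<and> c (exps 0 1 2 0) = 0"
    using golden pure W[where w = 2] by (simp add: hpoly_expand sym3_mat2 axis_def) algebra
  moreover have "c (exps 1 1 0 1) = 0 \<and> c (exps 1 0 2 0) = 0 \<and> c (exps 0 2 1 0) = 0"
    using golden pure W[where w = 3] by (simp add: hpoly_expand sym3_mat2 axis_def) algebra
  moreover have "c (exps 2 0 0 1) = 0 \<and> c (exps 1 1 1 0) = 0 \<and> c (exps 0 0 1 2) = 0"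
    using golden pure W[where w = 4] by (simp add: hpoly_expand sym3_mat2 axis_def) algebra
  ultimately show ?thesis using pure by (simp add: hpoly_expand)
qed

theorem lemma3p3:
  shows "\<not> (\<exists>d Z. d \<le> 3 \<and> surface_of_degree d Z \<and> A5_invariant Z)"
proof
  assume "\<exists>d Z. d \<le> 3 \<and> surface_of_degree d Z \<and> A5_invariant Z"
  then obtain d Z f where d: "1 \<le> d" "d \<le> 3" and "homogeneous_poly d f" "f \<noteq> (\<lambda>_. 0)"
    and Z: "Z = {x. f x = 0}" "A5_invariant Z"
    unfolding surface_of_degree_def by blast
  then obtain c where f: "f = hpoly d c" "hpoly d c \<noteq> (\<lambda>_. 0)"
    by (auto simp: homogeneous_poly_iff)
  interpret invariant_hypersurface d c Z
    using Z by unfold_locales (simp_all add: f)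
  have axes: "hpoly d c (axis j 1) = 0" for j
    using axis_mem[of j] d zero_set by auto
  have T_images: "weight_part d c w (sym3 (mat2 (- golden) 1 1 golden) (axis j 1)) = 0" for j w
    using weight_part_vanishes_at_T_image axis_mem d by simp
  from d have "d = 1 \<or> d = 2 \<or> d = 3" by auto
  then have "hpoly d c x = 0" for x
    using linear_form_eq_0 quadric_eq_0[OF golden_sq] cubic_eq_0[OF golden_sq] axes T_images by auto
  with f show False by auto
qed

end
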